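(* In the setting described in the context, the process $W(t)$ restricted to the set $\mathcal W$ of allocation states is time reversible; more precisely, for all $W,W'\in\mathcal W$ with $W\neq W'$, $$\binom{\alpha}{W}e^{\gamma\Psi(W)}P_{W,W'}=\binom{\alpha}{W'}e^{\gamma\Psi(W')}P_{W',W},$$ where $\binom{\alpha}{W}:=\frac{\prod_x\alpha_x!}{\prod_{x,y}W_{xy}!}$, $P_{W,W'}$ is the transition rate of $W(t)$ from $W$ to $W'$, and $$\Psi(W)=\sum_{y\in\mathcal X}\sum_{s=0}^{W_y}\Big[\lambda_y-\frac{k_cs}{\beta_y}\Big]+k_a\sum_{x,y\in\mathcal X}\sum_{s=0}^{W_{xy}}s .$$
   Context: $\mathcal X$ is a finite set of units, $\mathcal G=(\mathcal X,\mathcal E)$ a directed graph, $N_x=\{y:(x,y)\in\mathcal E\}$, $\alpha_x,\beta_x$ non-negative integers. A partial allocation state is a matrix $W\in\mathbb N^{\mathcal X\times\mathcal X}$ with $W_{xy}=0$ whenever $(x,y)\notin\mathcal E$, $W^x:=\sum_yW_{xy}\le\alpha_x$, $W_y:=\sum_xW_{xy}\le\beta_y$; it is an allocation state if $W^x=\alpha_x$ for all $x$; $\mathcal W_p,\mathcal W$ denote these sets; $e_{xy}$ is the matrix unit. Fix reals $\lambda_y$, $k_c,k_a\ge0$, $\gamma>0$ and let $f_{xy}(W)=\lambda_y-k_cW_y/\beta_y+k_aW_{xy}$ (in $\Psi$ the term with $s=0$ contributes $\lambda_y$, i.e. $0/0$ is read as $0$). Let $\mathcal X^x(W)=\{y\in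 N_x:W_y<\beta_y\}$ and $p_y(W,x)=e^{\gamma f_{xy}(W+e_{xy})}/\sum_{y'\in\mathcal X^x(W)}e^{\gamma f_{xy'}(W+e_{xy'})}$ for $y\in\mathcal X^x(W)$. Let $P_{\rm all}(W,x),P_{\rm dis}(W,x)\ge0$ with sum $1$, $P_{\rm all}(W,x)=0$ if $W^x=\alpha_x$, $P_{\rm dis}(W,x)=0$ if $W^x=0$. $W(t)$ is the continuous-time Markov process on $\mathcal W_p$ in which each unit $x$ activates at the times of an independent Poisson clock of rate $\nu_x\ge0$; upon activation in state $W$, with probability $P_{\rm all}(W,x)$ unit $x$ chooses $y^*\in\mathcal X^x(W)$ with probability $p_{y^*}(W,x)$ and the state becomes $W+e_{xy^*}$ (nothing happens if $\mathcal X^x(W)=\emptyset$); with probability $P_{\rm dis}(W,x)$ it chooses $\bar y$ with probability $W_{x\bar y}/W^x$, then $y^*\in\mathcal X^x(W-e_{x\bar y})$ with probability $p_{y^*}(W-e_{x\bar y},x)$, and the state becomes $W-e_{x\bar y}+e_{xy^*}$. *)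

theory Defs
  imports Complex_Main
begin

definition row_sum :: "'a set \<Rightarrow> ('a \<Rightarrow> 'a \<Rightarrow> nat) \<Rightarrow> 'a \<Rightarrow> nat" where
  "row_sum X W x = (\<Sum>y\<in>X. W x y)"

definition col_sum :: "'a set \<Rightarrow> ('a \<Rightarrow> 'a \<Rightarrow> nat) \<Rightarrow> 'a \<Rightarrow> nat" where
  "col_sum X W y = (\<Sum>x\<in>X. W x y)"

definition partial_alloc_states ::
  "'a set \<Rightarrow> ('a \<times> 'a) set \<Rightarrow> ('a \<Rightarrow> nat) \<Rightarrow> ('a \<Rightarrow> nat) \<Rightarrow> ('a \<Rightarrow> 'a \<Rightarrow> nat) set" where
  "partial_alloc_states X E alpha beta =
     {W. (\<forall>x y. (x, y) \<notin> E \<longrightarrow> W x y = 0) \<and>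
         (\<forall>x\<in>X. row_sum X W x \<le> alpha x) \<and> (\<forall>y\<in>X. col_sum X W y \<le> beta y)}"

definition alloc_states ::
  "'a set \<Rightarrow> ('a \<times> 'a) set \<Rightarrow> ('a \<Rightarrow> nat) \<Rightarrow> ('a \<Rightarrow> nat) \<Rightarrow> ('a \<Rightarrow> 'a \<Rightarrow> nat) set" where
  "alloc_states X E alpha beta =
     {W \<in> partial_alloc_states X E alpha beta. \<forall>x\<in>X. row_sum X W x = alpha x}"

definition add_unit :: "('a \<Rightarrow> 'a \<Rightarrow> nat) \<Rightarrow> 'a \<Rightarrow> 'a \<Rightarrow> ('a \<Rightarrow> 'a \<Rightarrow> nat)" where
  "add_unit W x y = W(x := (W x)(y := W x y + 1))"

definition sub_unit :: "('a \<Rightarrow> 'a \<Rightarrow> nat) \<Rightarrow> 'a \<Rightarrow> 'a \<Rightarrow> ('a \<Rightarrow> 'a \<Rightarrow> nat)" where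
  "sub_unit W x y = W(x := (W x)(y := W x y - 1))"

definition avail :: "'a set \<Rightarrow> ('a \<times> 'a) set \<Rightarrow> ('a \<Rightarrow> nat) \<Rightarrow> ('a \<Rightarrow> 'a \<Rightarrow> nat) \<Rightarrow> 'a \<Rightarrow> 'a set" where
  "avail X E beta W x = {y. (x, y) \<in> E \<and> col_sum X W y < beta y}"

definition fval :: "'a set \<Rightarrow> ('a \<Rightarrow> real) \<Rightarrow> real \<Rightarrow> real \<Rightarrow> ('a \<Rightarrow> nat)
    \<Rightarrow> ('a \<Rightarrow> 'a \<Rightarrow> nat) \<Rightarrow> 'a \<Rightarrow> 'a \<Rightarrow> real" where
  "fval X lam kc ka beta W x y =
     lam y - kc * real (col_sum X W y) / real (beta y) + ka * real (W x y)"

definition choice_prob :: "'a set \<Rightarrow> ('a \<times> 'a) set \<Rightarrow> ('a \<Rightarrow> real) \<Rightarrow> real \<Rightarrow> real \<Rightarrow> real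
    \<Rightarrow> ('a \<Rightarrow> nat) \<Rightarrow> ('a \<Rightarrow> 'a \<Rightarrow> nat) \<Rightarrow> 'a \<Rightarrow> 'a \<Rightarrow> real" where
  "choice_prob X E lam kc ka gamma beta W x y =
     exp (gamma * fval X lam kc ka beta (add_unit W x y) x y) /
     (\<Sum>y'\<in>avail X E beta W x. exp (gamma * fval X lam kc ka beta (add_unit W x y') x y'))"

text \<open>Transition rate P_{W,W'} of the continuous-time Markov process W(t) from W to W'
  (meaningful for W \<noteq> W').\<close>
definition trans_rate :: "'a set \<Rightarrow> ('a \<times> 'a) set \<Rightarrow> ('a \<Rightarrow> real) \<Rightarrow> real \<Rightarrow> real \<Rightarrow> real
    \<Rightarrow> ('a \<Rightarrow> nat) \<Rightarrow> ('a \<Rightarrow> real)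
    \<Rightarrow> (('a \<Rightarrow> 'a \<Rightarrow> nat) \<Rightarrow> 'a \<Rightarrow> real) \<Rightarrow> (('a \<Rightarrow> 'a \<Rightarrow> nat) \<Rightarrow> 'a \<Rightarrow> real)
    \<Rightarrow> ('a \<Rightarrow> 'a \<Rightarrow> nat) \<Rightarrow> ('a \<Rightarrow> 'a \<Rightarrow> nat) \<Rightarrow> real" where
  "trans_rate X E lam kc ka gamma beta nu Pall Pdis W W' =
     (\<Sum>x\<in>X. nu x *
        (Pall W x *
           (\<Sum>y\<in>avail X E beta W x.
              if add_unit W x y = W' then choice_prob X E lam kc ka gamma beta W x y else 0)
         + Pdis W x *
           (\<Sum>yb\<in>X. real (W x yb) / real (row_sum X W x) *
              (\<Sum>y\<in>avail X E beta (sub_unit W x yb) x.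
                 if add_unit (sub_unit W x yb) x y = W'
                 then choice_prob X E lam kc ka gamma beta (sub_unit W x yb) x y else 0))))"

text \<open>Psi(W); the term with s = 0 and beta_y = 0 gives lambda_y since x / 0 = 0 in Isabelle.\<close>
definition Psi :: "'a set \<Rightarrow> ('a \<Rightarrow> real) \<Rightarrow> real \<Rightarrow> real \<Rightarrow> ('a \<Rightarrow> nat)
    \<Rightarrow> ('a \<Rightarrow> 'a \<Rightarrow> nat) \<Rightarrow> real" where
  "Psi X lam kc ka beta W =
     (\<Sum>y\<in>X. \<Sum>s = 0..col_sum X W y. lam y - kc * real s / real (beta y))
     + ka * (\<Sum>x\<in>X. \<Sum>y\<in>X. \<Sum>s = 0..W x y. real s)"

definition multinom :: "'a set \<Rightarrow> ('a \<Rightarrow> nat) \<Rightarrow> ('a \<Rightarrow> 'a \<Rightarrow> nat) \<Rightarrow> real" where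
  "multinom X alpha W =
     (\<Prod>x\<in>X. fact (alpha x)) / (\<Prod>x\<in>X. \<Prod>y\<in>X. fact (W x y))"

end

theory Submission
  imports Defs
begin

text \<open>On an allocation state every unit is saturated, so P_all = 0 and every jump moves one link
  of some unit x from a to b: W = V + e_xa and W' = V + e_xb for a common partial state V.
  The weight \<pi>(W) = (\<alpha> choose W) e^(\<gamma>\<Psi>(W)) satisfies
  \<pi>(V + e_xa) (V_xa + 1) = \<pi>(V) e^(\<gamma> f_xa(V + e_xa)), and the move has rate
  \<nu>_x / \<alpha>_x \<cdot> W_xa \<cdot> p_b(V,x), where p_b(V,x) is e^(\<gamma> f_xb(V + e_xb)) divided by a normaliser
  depending on V only. Hence \<pi>(W) P_(W,W') is symmetric in a and b.\<close>

lemma add_unit_apply: "add_unit V x b x' y = V x' y + (if x' = x \<and> y = b then 1 else 0)"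
  by (simp add: add_unit_def)

lemma sub_unit_add_unit [simp]: "sub_unit (add_unit V x b) x b = V"
  by (auto simp: add_unit_def sub_unit_def fun_eq_iff)

lemma add_unit_sub_unit: "W x a \<noteq> 0 \<Longrightarrow> add_unit (sub_unit W x a) x a = W"
  by (auto simp: add_unit_def sub_unit_def fun_eq_iff)

lemma col_sum_add_unit:
  assumes "finite X" "x \<in> X"
  shows "col_sum X (add_unit V x b) y = col_sum X V y + (if y = b then 1 else 0)"
  using assms by (simp add: col_sum_def add_unit_apply sum.distrib)

lemma prod_mult_delta:
  fixes f :: "'a \<Rightarrow> 'b::comm_monoid_mult"
  assumes "finite X" "a \<in> X"
  shows "(\<Prod>y\<in>X. f y * (if y = a then d else 1)) = prod f X * d"
  using assms by (simp add: prod.distrib)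

lemma sum_add_delta:
  fixes f :: "'a \<Rightarrow> 'b::comm_monoid_add"
  assumes "finite X" "a \<in> X"
  shows "(\<Sum>y\<in>X. f y + (if y = a then d else 0)) = sum f X + d"
  using assms by (simp add: sum.distrib)

lemma prod_fact_add_unit:
  assumes "finite X" "x \<in> X" "b \<in> X"
  shows "(\<Prod>x'\<in>X. \<Prod>y\<in>X. fact (add_unit V x b x' y) :: real)
       = (\<Prod>x'\<in>X. \<Prod>y\<in>X. fact (V x' y)) * (real (V x b) + 1)"
proof -
  have "(\<Prod>y\<in>X. fact (add_unit V x b x' y) :: real)
      = (\<Prod>y\<in>X. fact (V x' y)) * (if x' = x then real (V x b) + 1 else 1)" for x'
  proof (cases "x' = x")
    case True
    then have "(\<Prod>y\<in>X. fact (add_unit V x b x' y) :: real)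
        = (\<Prod>y\<in>X. fact (V x' y) * (if y = b then real (V x b) + 1 else 1))"
      by (intro prod.cong) (auto simp: add_unit_apply)
    then show ?thesis using True assms by (simp add: prod_mult_delta)
  qed (simp add: add_unit_apply)
  then show ?thesis
    using assms by (simp add: prod_mult_delta)
qed

lemma Psi_add_unit:
  assumes "finite X" "x \<in> X" "a \<in> X"
  shows "Psi X lam kc ka beta (add_unit V x a)
       = Psi X lam kc ka beta V + fval X lam kc ka beta (add_unit V x a) x a"
proof -
  have "(\<Sum>s = 0..col_sum X (add_unit V x a) y. lam y - kc * real s / real (beta y))
      = (\<Sum>s = 0..col_sum X V y. lam y - kc * real s / real (beta y))
        + (if y = a then lam a - kc * real (col_sum X V a + 1) / real (beta a) else 0)" for y
    using assms by (simp add: col_sum_add_unit)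
  moreover have "(\<Sum>y\<in>X. \<Sum>s = 0..add_unit V x a x' y. real s)
      = (\<Sum>y\<in>X. \<Sum>s = 0..V x' y. real s) + (if x' = x then real (V x a) + 1 else 0)" for x'
  proof (cases "x' = x")
    case True
    then have "(\<Sum>y\<in>X. \<Sum>s = 0..add_unit V x a x' y. real s)
        = (\<Sum>y\<in>X. (\<Sum>s = 0..V x' y. real s) + (if y = a then real (V x a) + 1 else 0))"
      by (intro sum.cong) (auto simp: add_unit_apply)
    then show ?thesis using True assms by (simp add: sum_add_delta)
  qed (simp add: add_unit_apply)
  ultimately show ?thesis
    using assms by (simp add: Psi_def fval_def sum_add_delta col_sum_add_unit add_unit_apply algebra_simps)
qed

lemma multinom_add_unit:
  assumes "finite X" "x \<in> X" "b \<in> X"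
  shows "multinom X alpha (add_unit V x b) * (real (V x b) + 1) = multinom X alpha V"
proof -
  have "(\<Prod>x\<in>X. \<Prod>y\<in>X. fact (V x y) :: real) > 0"
    by (intro prod_pos) auto
  then show ?thesis
    using assms by (simp add: multinom_def prod_fact_add_unit)
qed

definition stationary_weight :: "'a set \<Rightarrow> ('a \<Rightarrow> nat) \<Rightarrow> ('a \<Rightarrow> real) \<Rightarrow> real \<Rightarrow> real \<Rightarrow> real
    \<Rightarrow> ('a \<Rightarrow> nat) \<Rightarrow> ('a \<Rightarrow> 'a \<Rightarrow> nat) \<Rightarrow> real" where
  "stationary_weight X alpha lam kc ka gamma beta W =
     multinom X alpha W * exp (gamma * Psi X lam kc ka beta W)"

lemma stationary_weight_add_unit:
  assumes "finite X" "x \<in> X" "b \<in> X"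
  shows "stationary_weight X alpha lam kc ka gamma beta (add_unit V x b) * (real (V x b) + 1)
       = stationary_weight X alpha lam kc ka gamma beta V
         * exp (gamma * fval X lam kc ka beta (add_unit V x b) x b)"
  using multinom_add_unit[OF assms, of alpha V]
  by (simp add: stationary_weight_def Psi_add_unit[OF assms] distrib_left exp_add mult_ac)

lemma stationary_weight_move_balance:
  assumes "finite X" "x \<in> X" "a \<in> X" "b \<in> X"
  shows "stationary_weight X alpha lam kc ka gamma beta (add_unit V x a) * (real (V x a) + 1)
         * choice_prob X E lam kc ka gamma beta V x b
       = stationary_weight X alpha lam kc ka gamma beta (add_unit V x b) * (real (V x b) + 1)
         * choice_prob X E lam kc ka gamma beta V x a"
proof -
  define e where "e c = exp (gamma * fval X lam kc ka beta (add_unit V x c) x c)" for c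
  define Z where "Z = (\<Sum>y\<in>avail X E beta V x. e y)"
  have "stationary_weight X alpha lam kc ka gamma beta (add_unit V x c) * (real (V x c) + 1)
         * choice_prob X E lam kc ka gamma beta V x d
      = stationary_weight X alpha lam kc ka gamma beta V * (e c * e d) / Z" if "c \<in> X" for c d
    using assms that by (simp add: stationary_weight_add_unit choice_prob_def e_def Z_def)
  then show ?thesis
    using assms by (simp add: mult.commute)
qed

lemma add_unit_mem_avail:
  assumes "finite X" "x \<in> X" "b \<in> X" "add_unit V x b \<in> partial_alloc_states X E alpha beta"
  shows "b \<in> avail X E beta V x"
proof -
  have "(x, b) \<in> E"
    using assms(4) by (force simp: partial_alloc_states_def add_unit_apply)
  moreover have "col_sum X (add_unit V x b) b \<le> beta b"
    using assms(3,4) by (simp add: partial_alloc_states_def)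
  ultimately show ?thesis
    using assms(1,2) by (simp add: avail_def col_sum_add_unit)
qed

text \<open>The contribution to P_(W,W') of x moving one link from a to b, without the factor \<nu>_x / W^x.\<close>

definition move_rate :: "'a set \<Rightarrow> ('a \<times> 'a) set \<Rightarrow> ('a \<Rightarrow> real) \<Rightarrow> real \<Rightarrow> real \<Rightarrow> real
    \<Rightarrow> ('a \<Rightarrow> nat) \<Rightarrow> ('a \<Rightarrow> 'a \<Rightarrow> nat) \<Rightarrow> ('a \<Rightarrow> 'a \<Rightarrow> nat) \<Rightarrow> 'a \<Rightarrow> 'a \<Rightarrow> 'a \<Rightarrow> real" where
  "move_rate X E lam kc ka gamma beta W W' x a b =
     real (W x a) *
     (if b \<in> avail X E beta (sub_unit W x a) x \<and> add_unit (sub_unit W x a) x b = W'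
      then choice_prob X E lam kc ka gamma beta (sub_unit W x a) x b else 0)"

lemma move_rate_eq:
  assumes "finite X" "x \<in> X" "b \<in> X" "W' \<in> partial_alloc_states X E alpha beta"
  shows "move_rate X E lam kc ka gamma beta W W' x a b =
    (if \<exists>V. W = add_unit V x a \<and> W' = add_unit V x b
     then real (W x a) * choice_prob X E lam kc ka gamma beta (sub_unit W x a) x b else 0)"
proof (cases "W x a = 0")
  case False
  then have "(\<exists>V. W = add_unit V x a \<and> W' = add_unit V x b) \<longleftrightarrow> W' = add_unit (sub_unit W x a) x b"
    by (metis add_unit_sub_unit sub_unit_add_unit)
  then show ?thesis
    using assms add_unit_mem_avail[OF assms(1-3)] by (auto simp: move_rate_def)
qed (auto simp: move_rate_def add_unit_apply)

lemma move_rate_balance: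
  assumes "finite X" "x \<in> X" "a \<in> X" "b \<in> X"
    and "W \<in> partial_alloc_states X E alpha beta" "W' \<in> partial_alloc_states X E alpha beta"
  shows "stationary_weight X alpha lam kc ka gamma beta W * move_rate X E lam kc ka gamma beta W W' x a b
       = stationary_weight X alpha lam kc ka gamma beta W' * move_rate X E lam kc ka gamma beta W' W x b a"
proof (cases "\<exists>V. W = add_unit V x a \<and> W' = add_unit V x b")
  case True
  then obtain V where W: "W = add_unit V x a" and W': "W' = add_unit V x b"
    by blast
  have "\<exists>V'. W' = add_unit V' x b \<and> W = add_unit V' x a"
    using True by blast
  then show ?thesis
    using True assms stationary_weight_move_balance[OF assms(1-4), of alpha lam kc ka gamma beta V E]
    by (simp add: move_rate_eq W W' add_unit_apply mult.assoc add.commute)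
next
  case False
  then show ?thesis
    using assms by (auto simp: move_rate_eq)
qed

lemma trans_rate_eq_move_rates:
  assumes "finite X" "E \<subseteq> X \<times> X" "\<forall>x\<in>X. Pall W x = 0 \<and> Pdis W x = 1"
  shows "trans_rate X E lam kc ka gamma beta nu Pall Pdis W W' =
     (\<Sum>x\<in>X. nu x / real (row_sum X W x)
        * (\<Sum>a\<in>X. \<Sum>b\<in>X. move_rate X E lam kc ka gamma beta W W' x a b))"
  unfolding trans_rate_def
proof (intro sum.cong refl)
  fix x assume "x \<in> X"
  let ?p = "choice_prob X E lam kc ka gamma beta"
  have "(\<Sum>b\<in>X. if b \<in> avail X E beta V x \<and> add_unit V x b = W' then ?p V x b else 0)
      = (\<Sum>b\<in>avail X E beta V x. if add_unit V x b = W' then ?p V x b else 0)" for V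
  proof -
    have "{b \<in> X. b \<in> avail X E beta V x} = avail X E beta V x"
      using assms(2) by (auto simp: avail_def)
    then show ?thesis
      unfolding sum.inter_filter[OF assms(1), symmetric] if_if_eq_conj[symmetric] by simp
  qed
  then have "(\<Sum>a\<in>X. \<Sum>b\<in>X. move_rate X E lam kc ka gamma beta W W' x a b)
      = (\<Sum>a\<in>X. real (W x a) * (\<Sum>b\<in>avail X E beta (sub_unit W x a) x.
           if add_unit (sub_unit W x a) x b = W' then ?p (sub_unit W x a) x b else 0))"
    by (simp only: move_rate_def sum_distrib_left[symmetric])
  then show "nu x * (Pall W x * (\<Sum>y\<in>avail X E beta W x. if add_unit W x y = W' then ?p W x y else 0)
      + Pdis W x * (\<Sum>yb\<in>X. real (W x yb) / real (row_sum X W x) *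
         (\<Sum>y\<in>avail X E beta (sub_unit W x yb) x. if add_unit (sub_unit W x yb) x y = W'
            then ?p (sub_unit W x yb) x y else 0)))
    = nu x / real (row_sum X W x) * (\<Sum>a\<in>X. \<Sum>b\<in>X. move_rate X E lam kc ka gamma beta W W' x a b)"
    using assms(3) \<open>x \<in> X\<close> by (simp add: sum_divide_distrib[symmetric])
qed

theorem proposition2:
  fixes X :: "'a set" and E :: "('a \<times> 'a) set"
    and alpha beta :: "'a \<Rightarrow> nat" and lam :: "'a \<Rightarrow> real"
    and kc ka gamma :: real and nu :: "'a \<Rightarrow> real"
    and Pall Pdis :: "('a \<Rightarrow> 'a \<Rightarrow> nat) \<Rightarrow> 'a \<Rightarrow> real"
    and W W' :: "'a \<Rightarrow> 'a \<Rightarrow> nat"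
  assumes "finite X" and "E \<subseteq> X \<times> X"
    and "kc \<ge> 0" and "ka \<ge> 0" and "gamma > 0"
    and "\<forall>x\<in>X. nu x \<ge> 0"
    and "\<forall>V\<in>partial_alloc_states X E alpha beta. \<forall>x\<in>X.
           Pall V x \<ge> 0 \<and> Pdis V x \<ge> 0 \<and> Pall V x + Pdis V x = 1 \<and>
           (row_sum X V x = alpha x \<longrightarrow> Pall V x = 0) \<and>
           (row_sum X V x = 0 \<longrightarrow> Pdis V x = 0)"
    and "W \<in> alloc_states X E alpha beta" and "W' \<in> alloc_states X E alpha beta"
    and "W \<noteq> W'"
  shows "multinom X alpha W * exp (gamma * Psi X lam kc ka beta W)
           * trans_rate X E lam kc ka gamma beta nu Pall Pdis W W'
       = multinom X alpha W' * exp (gamma * Psi X lam kc ka beta W')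
           * trans_rate X E lam kc ka gamma beta nu Pall Pdis W' W"
proof -
  let ?w = "stationary_weight X alpha lam kc ka gamma beta"
  let ?m = "move_rate X E lam kc ka gamma beta"
  have weighted_rate: "?w U * trans_rate X E lam kc ka gamma beta nu Pall Pdis U U'
      = (\<Sum>x\<in>X. nu x / real (alpha x) * (\<Sum>a\<in>X. \<Sum>b\<in>X. ?w U * ?m U U' x a b))"
    if "U \<in> alloc_states X E alpha beta" for U U'
  proof -
    have "\<forall>x\<in>X. Pall U x = 0 \<and> Pdis U x = 1" "\<forall>x\<in>X. row_sum X U x = alpha x"
      using assms(7) that by (fastforce simp: alloc_states_def)+
    then have "trans_rate X E lam kc ka gamma beta nu Pall Pdis U U'
        = (\<Sum>x\<in>X. nu x / real (alpha x) * (\<Sum>a\<in>X. \<Sum>b\<in>X. ?m U U' x a b))"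
      using assms(1,2) by (simp add: trans_rate_eq_move_rates)
    then show ?thesis
      by (simp add: sum_distrib_left mult.left_commute)
  qed
  have partial: "W \<in> partial_alloc_states X E alpha beta" "W' \<in> partial_alloc_states X E alpha beta"
    using assms(8,9) by (auto simp: alloc_states_def)
  have "(\<Sum>a\<in>X. \<Sum>b\<in>X. ?w W * ?m W W' x a b) = (\<Sum>b\<in>X. \<Sum>a\<in>X. ?w W' * ?m W' W x b a)"
    if "x \<in> X" for x
    by (subst sum.swap) (auto intro!: sum.cong move_rate_balance[OF assms(1) that _ _ partial])
  then show ?thesis
    using weighted_rate[OF assms(8), of W'] weighted_rate[OF assms(9), of W]
    by (simp add: stationary_weight_def)
qed

end
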